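(* Let $S$ be a GCD closed set of positive integers with $n\ge 3$ elements. Then $i_+([S])\ge 1$ and $2\le i_-([S])\le n-1$.
   Context: $S$ is GCD closed if $\gcd(x,y)\in S$ for all $x,y\in S$. The LCM matrix $[S]$ of $S=\{x_1,\dots,x_n\}$ has $(i,j)$ entry $\mathrm{lcm}(x_i,x_j)$; $i_+(M)$ and $i_-(M)$ denote the numbers of positive and negative eigenvalues (with multiplicity) of a real symmetric matrix $M$. *)

theory Defs
  imports "Jordan_Normal_Form.Char_Poly"
begin

definition gcd_closed :: "nat set \<Rightarrow> bool" where
  "gcd_closed S \<longleftrightarrow> (\<forall>x\<in>S. \<forall>y\<in>S. gcd x y \<in> S)"

text \<open>LCM matrix of S = {x_1 < ... < x_n} (elements listed in increasing order;
  the inertia does not depend on the ordering).\<close>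
definition lcm_matrix :: "nat set \<Rightarrow> real mat" where
  "lcm_matrix S = (let xs = sorted_list_of_set S in
     mat (length xs) (length xs) (\<lambda>(i,j). real (lcm (xs ! i) (xs ! j))))"

text \<open>Number of positive / negative eigenvalues counted with (algebraic) multiplicity,
  i.e. positive / negative real roots of the characteristic polynomial counted with order.\<close>
definition i_plus :: "real mat \<Rightarrow> nat" where
  "i_plus M = (\<Sum>x\<in>{x. x > 0 \<and> poly (char_poly M) x = 0}. order x (char_poly M))"

definition i_minus :: "real mat \<Rightarrow> nat" where
  "i_minus M = (\<Sum>x\<in>{x. x < 0 \<and> poly (char_poly M) x = 0}. order x (char_poly M))"

end

theory Submission
  imports Defs "Jordan_Normal_Form.Schur_Decomposition"
begin

text \<open>The LCM matrix is real symmetric, so its characteristic polynomial splits over the reals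
  and \<open>i\<^sub>+\<close>, \<open>i\<^sub>-\<close> count its eigenvalues by sign; in particular \<open>i\<^sub>+ + i\<^sub>- \<le> n\<close>.
  Conversely, a congruence \<open>U\<^sup>T [S] U\<close> to a diagonal matrix with \<open>k\<close> positive (negative)
  entries forces \<open>k\<close> positive (negative) eigenvalues. Let \<open>m < a < b\<close> be the three smallest
  elements of \<open>S\<close>. GCD closedness makes \<open>m\<close> divide every element, and \<open>gcd a b\<close> is \<open>m\<close>
  or \<open>a\<close>. The first unit vector gives \<open>e\<^sub>0\<^sup>T [S] e\<^sub>0 = m > 0\<close>, and in both cases two
  explicit vectors supported on the first three coordinates are \<open>[S]\<close>-orthogonal with negative
  values of the quadratic form, so \<open>i\<^sub>+ \<ge> 1\<close>, \<open>i\<^sub>- \<ge> 2\<close> and hence \<open>i\<^sub>- \<le> n - 1\<close>.\<close>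


section \<open>Spectra of real symmetric matrices\<close>

lemma eigenvalue_real_symmetric_is_real:
  fixes A :: "real mat"
  assumes A: "A \<in> carrier_mat n n" and sym: "A\<^sup>T = A"
    and ev: "eigenvalue (map_mat complex_of_real A) a"
  shows "a = of_real (Re a)"
proof -
  have Ac: "map_mat complex_of_real A \<in> carrier_mat n n" using A by auto
  obtain v where v: "v \<in> carrier_vec n" "v \<noteq> 0\<^sub>v n" "map_mat complex_of_real A *\<^sub>v v = a \<cdot>\<^sub>v v"
    using ev Ac unfolding eigenvalue_def eigenvector_def by auto
  have row: "(\<Sum>j<n. of_real (A $$ (i,j)) * v $ j) = a * v $ i" if i: "i < n" for i
  proof -
    have "(map_mat complex_of_real A *\<^sub>v v) $ i = a * v $ i" using v(3) i v(1) by simp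
    thus ?thesis using i A v(1)
      by (auto simp: scalar_prod_def atLeast0LessThan mult.commute)
  qed
  \<comment> \<open>\<open>s = v\<^sup>* A v\<close> is real by symmetry and equals \<open>a |v|\<^sup>2\<close>\<close>
  define s where "s = (\<Sum>i<n. \<Sum>j<n. cnj (v $ i) * of_real (A $$ (i,j)) * v $ j)"
  define N where "N = (\<Sum>i<n. (cmod (v $ i))\<^sup>2)"
  have "s = (\<Sum>i<n. cnj (v $ i) * (\<Sum>j<n. of_real (A $$ (i,j)) * v $ j))"
    unfolding s_def by (simp add: sum_distrib_left mult.assoc)
  also have "\<dots> = (\<Sum>i<n. cnj (v $ i) * (a * v $ i))" by (simp add: row)
  also have "\<dots> = a * of_real N"
    unfolding N_def of_real_sum
    by (simp add: sum_distrib_left complex_norm_square mult.commute mult.left_commute del: of_real_power)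
  finally have s_eq: "s = a * of_real N" .
  have Aij: "A $$ (i,j) = A $$ (j,i)" if "i < n" "j < n" for i j
    using arg_cong[OF sym, of "\<lambda>M. M $$ (i,j)"] that A by auto
  have "cnj s = (\<Sum>i<n. \<Sum>j<n. v $ i * of_real (A $$ (i,j)) * cnj (v $ j))"
    unfolding s_def by (simp add: cnj_sum)
  also have "\<dots> = (\<Sum>j<n. \<Sum>i<n. v $ i * of_real (A $$ (i,j)) * cnj (v $ j))"
    by (rule sum.swap)
  also have "\<dots> = s" unfolding s_def
    by (intro sum.cong refl) (simp add: Aij mult.commute mult.left_commute)
  finally have s_real: "cnj s = s" .
  obtain i where i: "i < n" "v $ i \<noteq> 0" using v(1,2) by (metis eq_vecI carrier_vecD index_zero_vec)
  have "(cmod (v $ i))\<^sup>2 \<le> N" unfolding N_def using i by (intro member_le_sum) auto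
  moreover have "(cmod (v $ i))\<^sup>2 > 0" using i by auto
  ultimately have "N > 0" by linarith
  hence "cnj a = a" using s_real s_eq by simp
  thus ?thesis by (simp add: complex_eq_iff)
qed

lemma char_poly_real_symmetric_splits:
  fixes A :: "real mat"
  assumes A: "A \<in> carrier_mat n n" and sym: "A\<^sup>T = A"
  shows "\<exists>es. char_poly A = (\<Prod>e\<leftarrow>es. [:-e,1:])"
proof -
  interpret R: map_poly_inj_comm_ring_hom "of_real :: real \<Rightarrow> complex" ..
  define Ac where "Ac = map_mat complex_of_real A"
  have Ac: "Ac \<in> carrier_mat n n" unfolding Ac_def using A by auto
  have cpc: "char_poly Ac = map_poly of_real (char_poly A)"
    unfolding Ac_def by (rule of_real_hom.char_poly_hom[OF A])
  obtain as where "Polynomial.smult (lead_coeff (char_poly Ac)) (\<Prod>a\<leftarrow>as. [:- a, 1:]) = char_poly Ac"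
    using fundamental_theorem_algebra_factorized by blast
  moreover have "lead_coeff (char_poly Ac) = 1" using degree_monic_char_poly[OF Ac] by auto
  ultimately have as: "char_poly Ac = (\<Prod>a\<leftarrow>as. [:- a, 1:])" by simp
  have real: "a = of_real (Re a)" if a: "a \<in> set as" for a
  proof (rule eigenvalue_real_symmetric_is_real[OF A sym])
    show "eigenvalue (map_mat complex_of_real A) a"
      unfolding Ac_def[symmetric] eigenvalue_root_char_poly[OF Ac] as
      using linear_poly_root[OF a] .
  qed
  have "map_poly of_real (\<Prod>e\<leftarrow>map Re as. [:-e,1:]) = char_poly Ac"
    unfolding as by (simp add: R.hom_prod_list o_def, intro arg_cong[where f=prod_list] map_cong)
      (use real in auto)
  hence "char_poly A = (\<Prod>e\<leftarrow>map Re as. [:-e,1:])"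
    unfolding cpc by (rule R.injectivity[symmetric])
  thus ?thesis by blast
qed

lemma order_prod_linear_factors:
  "Polynomial.order (x::'a::idom) (\<Prod>e\<leftarrow>es. [:-e,1:]) = count_list es x"
proof (induction es)
  case Nil
  then show ?case by (simp add: order_0I)
next
  case (Cons a es)
  have "(\<Prod>e\<leftarrow>es. [:-e,1:]) \<noteq> 0" by (auto simp: prod_list_zero_iff)
  hence "[:-a,1:] * (\<Prod>e\<leftarrow>es. [:-e,1:]) \<noteq> 0"
    by (metis mult_eq_0_iff pCons_eq_0_iff one_neq_zero)
  hence "Polynomial.order x ([:-a,1:] * (\<Prod>e\<leftarrow>es. [:-e,1:])) = Polynomial.order x [:-a,1:] + Polynomial.order x (\<Prod>e\<leftarrow>es. [:-e,1:])"
    by (rule order_mult)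
  thus ?case using Cons by (simp add: order_linear')
qed

lemma sum_order_roots_prod_linear_factors:
  fixes P :: "'a::idom \<Rightarrow> bool"
  shows "(\<Sum>x\<in>{x. P x \<and> poly (\<Prod>e\<leftarrow>es. [:-e,1:]) x = 0}. Polynomial.order x (\<Prod>e\<leftarrow>es. [:-e,1:]))
         = length (filter P es)"
proof -
  have roots: "{x. P x \<and> poly (\<Prod>e\<leftarrow>es. [:-e,1:]) x = 0} = set (filter P es)"
    by (auto simp: poly_prod_list_zero_iff)
  have "(\<Sum>x\<in>set (filter P es). Polynomial.order x (\<Prod>e\<leftarrow>es. [:-e,1:]))
      = (\<Sum>x\<in>set (filter P es). count_list (filter P es) x)"
    unfolding order_prod_linear_factors
    by (intro sum.cong refl) (auto simp: count_list_eq_length_filter filter_filter intro!: arg_cong[where f=length] filter_cong)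
  also have "\<dots> = length (filter P es)" by (rule sum_count_set) auto
  finally show ?thesis unfolding roots .
qed

lemma real_symmetric_inertia_eigenvalues:
  fixes A :: "real mat"
  assumes A: "A \<in> carrier_mat n n" and sym: "A\<^sup>T = A"
  obtains es where "char_poly A = (\<Prod>e\<leftarrow>es. [:-e,1:])" "length es = n"
    "i_plus A = length (filter (\<lambda>e. e > 0) es)" "i_minus A = length (filter (\<lambda>e. e < 0) es)"
proof -
  obtain es where es: "char_poly A = (\<Prod>e\<leftarrow>es. [:-e,1:])"
    using char_poly_real_symmetric_splits[OF A sym] by blast
  have "length es = n"
    using degree_monic_char_poly[OF A] degree_linear_factors[of uminus es] es by auto
  moreover have "i_plus A = length (filter (\<lambda>e. e > 0) es)"
    unfolding i_plus_def es by (rule sum_order_roots_prod_linear_factors[where P = "\<lambda>x. x > 0"])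
  moreover have "i_minus A = length (filter (\<lambda>e. e < 0) es)"
    unfolding i_minus_def es by (rule sum_order_roots_prod_linear_factors[where P = "\<lambda>x. x < 0"])
  ultimately show thesis using that es by blast
qed

lemma i_plus_add_i_minus_le:
  fixes A :: "real mat"
  assumes "A \<in> carrier_mat n n" and "A\<^sup>T = A"
  shows "i_plus A + i_minus A \<le> n"
proof -
  obtain es where "char_poly A = (\<Prod>e\<leftarrow>es. [:-e,1:])" and es: "length es = n"
    "i_plus A = length (filter (\<lambda>e. e > 0) es)" "i_minus A = length (filter (\<lambda>e. e < 0) es)"
    by (rule real_symmetric_inertia_eigenvalues[OF assms])
  have "length (filter (\<lambda>e. e > 0) es) + length (filter (\<lambda>e. e < 0) es) \<le> length es"
    by (induction es) auto
  with es show ?thesis by simp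
qed

section \<open>Quadratic forms\<close>

lemma cscalar_prod_real: "(x::real vec) \<bullet>c y = x \<bullet> y"
proof -
  have "conjugate y = y" by (rule eq_vecI) auto
  thus ?thesis by simp
qed

lemma corthogonal_normalized_cols:
  fixes ws :: "real vec list"
  assumes ws: "set ws \<subseteq> carrier_vec n" "corthogonal ws" "length ws = n"
  defines "W \<equiv> mat n n (\<lambda>(i,j). ws ! j $ i / sqrt (ws ! j \<bullet> ws ! j))"
  shows "W\<^sup>T * W = 1\<^sub>m n"
proof (rule eq_matI)
  define nm where "nm i = sqrt (ws ! i \<bullet> ws ! i)" for i
  have wsc: "\<And>i. i < n \<Longrightarrow> ws ! i \<in> carrier_vec n" using ws by auto
  have orth: "\<And>i j. i < n \<Longrightarrow> j < n \<Longrightarrow> (ws ! i \<bullet> ws ! j = 0) = (i \<noteq> j)"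
    using ws(2,3) unfolding corthogonal_def cscalar_prod_real by auto
  have sq: "ws ! i \<bullet> ws ! i \<ge> 0" for i
    unfolding scalar_prod_def by (auto intro: sum_nonneg)
  fix i j assume "i < dim_row (1\<^sub>m n)" and "j < dim_col (1\<^sub>m n)"
  hence i: "i < n" and j: "j < n" by auto
  have "(W\<^sup>T * W) $$ (i,j) = (\<Sum>k<n. (ws ! i $ k / nm i) * (ws ! j $ k / nm j))"
    using i j unfolding W_def nm_def
    by (auto simp: scalar_prod_def atLeast0LessThan intro!: sum.cong)
  also have "\<dots> = (ws ! i \<bullet> ws ! j) / (nm i * nm j)"
    using wsc[OF i] wsc[OF j]
    by (auto simp: scalar_prod_def atLeast0LessThan sum_divide_distrib intro!: sum.cong)
  also have "\<dots> = 1\<^sub>m n $$ (i,j)"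
  proof (cases "i = j")
    case True
    have "nm i * nm i = ws ! i \<bullet> ws ! i" unfolding nm_def using sq[of i] by simp
    thus ?thesis using True i orth[OF i i] by auto
  next
    case False thus ?thesis using orth[OF i j] i j by auto
  qed
  finally show "(W\<^sup>T * W) $$ (i,j) = 1\<^sub>m n $$ (i,j)" .
qed (auto simp: W_def)

lemma orthonormal_completion:
  fixes v :: "real vec"
  assumes v: "v \<in> carrier_vec n" and v0: "v \<noteq> 0\<^sub>v n"
  obtains W c where "W \<in> carrier_mat n n" "W\<^sup>T * W = 1\<^sub>m n" "col W 0 = c \<cdot>\<^sub>v v"
proof -
  interpret cof_vec_space n "TYPE(real)" .
  define b where "b = basis_completion v"
  define ws where "ws = gram_schmidt n b"
  from basis_completion[OF v v0, folded b_def]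
  have dist_b: "distinct b" and indep: "\<not> lin_dep (set b)" and b: "set b \<subseteq> carrier_vec n"
    and hdb: "hd b = v" and len_b: "length b = n" by auto
  have n: "n \<noteq> 0" using v v0 by auto
  from hdb len_b n obtain vs where bv: "b = v # vs" by (cases b, auto)
  from gram_schmidt_result[OF b dist_b indep refl, folded ws_def]
  have ws: "set ws \<subseteq> carrier_vec n" "corthogonal ws" "length ws = n" by (auto simp: len_b)
  from gram_schmidt_hd[OF v, of vs, folded bv] have "hd ws = v" unfolding ws_def .
  hence "ws ! 0 = v" using ws(3) n by (cases ws) auto
  hence "col (mat n n (\<lambda>(i,j). ws ! j $ i / sqrt (ws ! j \<bullet> ws ! j))) 0 = (1 / sqrt (v \<bullet> v)) \<cdot>\<^sub>v v"
    using n v by (auto intro!: eq_vecI)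
  with corthogonal_normalized_cols[OF ws] show thesis by (intro that) auto
qed

lemma wide_mat_kernel_nontrivial:
  fixes U :: "'a :: field mat"
  assumes U: "U \<in> carrier_mat n k" and nk: "n < k"
  obtains c where "c \<in> carrier_vec k" "c \<noteq> 0\<^sub>v k" "U *\<^sub>v c = 0\<^sub>v n"
proof -
  \<comment> \<open>\<open>U\<close> padded by zero rows is a singular square matrix with the same kernel\<close>
  define U' where "U' = mat\<^sub>r k k (\<lambda>i. if i = k - 1 then 0\<^sub>v k else if i < n then row U i else 0\<^sub>v k)"
  have U': "U' \<in> carrier_mat k k" unfolding U'_def by auto
  have "det U' = 0" unfolding U'_def
    by (rule det_row_0) (use nk U in auto)
  then obtain c where c: "c \<in> carrier_vec k" "c \<noteq> 0\<^sub>v k" "U' *\<^sub>v c = 0\<^sub>v k"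
    unfolding det_0_iff_vec_prod_zero[OF U'] by auto
  have "U *\<^sub>v c = 0\<^sub>v n"
  proof (rule eq_vecI)
    fix i assume "i < dim_vec (0\<^sub>v n :: 'a vec)"
    hence i: "i < n" by auto
    have "(U' *\<^sub>v c) $ i = 0" using c(3) i nk by auto
    moreover have "i \<noteq> k - 1" using i nk by auto
    ultimately have "row U i \<bullet> c = 0" using i nk U unfolding U'_def by auto
    thus "(U *\<^sub>v c) $ i = 0\<^sub>v n $ i" using i U by auto
  qed (use U in auto)
  with c that show thesis by blast
qed

lemma quadratic_form_mult_mat_vec:
  fixes A :: "'a :: comm_ring mat"
  assumes A: "A \<in> carrier_mat n n" and W: "W \<in> carrier_mat n k" and z: "z \<in> carrier_vec k"
  shows "(W *\<^sub>v z) \<bullet> (A *\<^sub>v (W *\<^sub>v z)) = z \<bullet> ((W\<^sup>T * A * W) *\<^sub>v z)"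
proof -
  have "(W *\<^sub>v z) \<bullet> (A *\<^sub>v (W *\<^sub>v z)) = (W\<^sup>T *\<^sub>v (A *\<^sub>v (W *\<^sub>v z))) \<bullet> z"
    using transpose_vec_mult_scalar[OF W z, of "A *\<^sub>v (W *\<^sub>v z)"] A W z
    by (simp add: comm_scalar_prod[of _ n])
  also have "W\<^sup>T *\<^sub>v (A *\<^sub>v (W *\<^sub>v z)) = (W\<^sup>T * A * W) *\<^sub>v z"
  proof -
    have AW: "A * W \<in> carrier_mat n k" using A W by auto
    have "(W\<^sup>T * A * W) *\<^sub>v z = (W\<^sup>T * (A * W)) *\<^sub>v z"
      using A W by (simp add: assoc_mult_mat[of _ k n _ n])
    also have "\<dots> = W\<^sup>T *\<^sub>v ((A * W) *\<^sub>v z)"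
      using W AW z by (intro assoc_mult_mat_vec) auto
    finally show ?thesis using A W z by simp
  qed
  also have "\<dots> \<bullet> z = z \<bullet> ((W\<^sup>T * A * W) *\<^sub>v z)"
  proof -
    have "W\<^sup>T * A * W \<in> carrier_mat k k" using A W by auto
    thus ?thesis using comm_scalar_prod mult_mat_vec_carrier z by blast
  qed
  finally show ?thesis .
qed

lemma quadratic_form_four_block_diag:
  fixes C :: "'a :: comm_ring mat"
  assumes C: "C \<in> carrier_mat m m" and z: "z \<in> carrier_vec (Suc m)"
  defines "t \<equiv> vec m (\<lambda>i. z $ Suc i)"
  shows "z \<bullet> (four_block_mat (mat 1 1 (\<lambda>_. e)) (0\<^sub>m 1 m) (0\<^sub>m m 1) C *\<^sub>v z)
    = e * (z $ 0) * (z $ 0) + t \<bullet> (C *\<^sub>v t)"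
proof -
  define B where "B = four_block_mat (mat 1 1 (\<lambda>_. e)) (0\<^sub>m 1 m) (0\<^sub>m m 1) C"
  have Bc: "B \<in> carrier_mat (Suc m) (Suc m)" unfolding B_def using C by auto
  have Bz: "B *\<^sub>v z = vec (Suc m) (\<lambda>i. if i = 0 then e * z $ 0 else (C *\<^sub>v t) $ (i - 1))"
  proof (rule eq_vecI)
    fix i assume "i < dim_vec (vec (Suc m) (\<lambda>i. if i = 0 then e * z $ 0 else (C *\<^sub>v t) $ (i - 1)))"
    hence i: "i < Suc m" by auto
    have "(B *\<^sub>v z) $ i = (\<Sum>j<Suc m. B $$ (i,j) * z $ j)"
      using i Bc z by (auto simp: scalar_prod_def atLeast0LessThan mult.commute)
    also have "\<dots> = B $$ (i,0) * z $ 0 + (\<Sum>j<m. B $$ (i, Suc j) * z $ Suc j)"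
      by (rule sum.lessThan_Suc_shift)
    also have "\<dots> = (if i = 0 then e * z $ 0 else (C *\<^sub>v t) $ (i - 1))"
    proof (cases i)
      case 0 thus ?thesis using C unfolding B_def by auto
    next
      case (Suc i')
      hence "i' < m" using i by auto
      thus ?thesis using C Suc unfolding B_def t_def
        by (auto simp: scalar_prod_def atLeast0LessThan intro!: sum.cong)
    qed
    finally show "(B *\<^sub>v z) $ i = vec (Suc m) (\<lambda>i. if i = 0 then e * z $ 0 else (C *\<^sub>v t) $ (i - 1)) $ i"
      using i by auto
  qed (use Bc in auto)
  have "z \<bullet> (B *\<^sub>v z) = (\<Sum>i<Suc m. z $ i * (B *\<^sub>v z) $ i)"
    using z Bc by (auto simp: scalar_prod_def atLeast0LessThan)
  also have "\<dots> = z $ 0 * (B *\<^sub>v z) $ 0 + (\<Sum>i<m. z $ Suc i * (B *\<^sub>v z) $ Suc i)"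
    by (rule sum.lessThan_Suc_shift)
  also have "\<dots> = e * (z $ 0) * (z $ 0) + t \<bullet> (C *\<^sub>v t)"
    unfolding Bz using C by (auto simp: scalar_prod_def atLeast0LessThan t_def intro!: sum.cong)
      (simp add: ac_simps)
  finally show ?thesis unfolding B_def .
qed

lemma quadratic_form_diagonal_mat:
  fixes D :: "'a :: comm_semiring_1 mat"
  assumes D: "D \<in> carrier_mat k k" and diag: "diagonal_mat D" and c: "c \<in> carrier_vec k"
  shows "c \<bullet> (D *\<^sub>v c) = (\<Sum>i<k. D $$ (i,i) * (c $ i)\<^sup>2)"
proof -
  have "(D *\<^sub>v c) $ i = D $$ (i,i) * c $ i" if i: "i < k" for i
  proof -
    have "(D *\<^sub>v c) $ i = (\<Sum>j\<in>{0..<k}. D $$ (i,j) * c $ j)"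
      using D c i by (simp add: scalar_prod_def)
    also have "\<dots> = (\<Sum>j\<in>{0..<k}. if j = i then D $$ (i,i) * c $ i else 0)"
      using diag D i unfolding diagonal_mat_def by (intro sum.cong) auto
    also have "\<dots> = D $$ (i,i) * c $ i" using i by simp
    finally show ?thesis .
  qed
  thus ?thesis using D c
    by (auto simp: scalar_prod_def atLeast0LessThan power2_eq_square ac_simps intro!: sum.cong)
qed

lemma scalar_prod_mult_mat_vec_supported:
  fixes A :: "'a :: comm_semiring_0 mat"
  assumes A: "A \<in> carrier_mat n n" and x: "x \<in> carrier_vec n" and y: "y \<in> carrier_vec n"
    and "k \<le> n" and zero: "\<And>i. k \<le> i \<Longrightarrow> i < n \<Longrightarrow> x $ i = 0 \<and> y $ i = 0"
  shows "x \<bullet> (A *\<^sub>v y) = (\<Sum>i<k. \<Sum>j<k. x $ i * A $$ (i,j) * y $ j)"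
proof -
  have "x \<bullet> (A *\<^sub>v y) = (\<Sum>i<n. \<Sum>j<n. x $ i * A $$ (i,j) * y $ j)"
    using A x y by (simp add: scalar_prod_def atLeast0LessThan sum_distrib_left mult.assoc)
  also have "\<dots> = (\<Sum>i<k. \<Sum>j<n. x $ i * A $$ (i,j) * y $ j)"
    by (rule sum.mono_neutral_right) (use assms in auto)
  also have "\<dots> = (\<Sum>i<k. \<Sum>j<k. x $ i * A $$ (i,j) * y $ j)"
    by (rule sum.cong[OF refl], rule sum.mono_neutral_right) (use assms in auto)
  finally show ?thesis .
qed

lemma mat_of_cols_congruence_index:
  fixes A :: "'a :: comm_semiring_0 mat"
  assumes A: "A \<in> carrier_mat n n" and us: "set us \<subseteq> carrier_vec n"
    and i: "i < length us" and j: "j < length us"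
  shows "((mat_of_cols n us)\<^sup>T * A * mat_of_cols n us) $$ (i,j) = us ! i \<bullet> (A *\<^sub>v us ! j)"
proof -
  have W: "mat_of_cols n us \<in> carrier_mat n (length us)" by simp
  have "(mat_of_cols n us)\<^sup>T * A * mat_of_cols n us = (mat_of_cols n us)\<^sup>T * (A * mat_of_cols n us)"
    by (rule assoc_mult_mat) (use A W in auto)
  hence "((mat_of_cols n us)\<^sup>T * A * mat_of_cols n us) $$ (i,j)
      = col (mat_of_cols n us) i \<bullet> col (A * mat_of_cols n us) j"
    using A i j by simp
  also have "\<dots> = us ! i \<bullet> (A *\<^sub>v us ! j)"
    using A W i j us by (simp add: col_mult2[OF A W] subset_code(1))
  finally show ?thesis .
qed

section \<open>Inertia lower bounds\<close>

lemma symmetric_mat_first_col_split: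
  fixes A :: "'a :: comm_ring mat"
  assumes A: "A \<in> carrier_mat (Suc n) (Suc n)" and sym: "A\<^sup>T = A"
    and col0: "\<And>i. i < Suc n \<Longrightarrow> A $$ (i, 0) = (if i = 0 then e else 0)"
  defines "B \<equiv> mat n n (\<lambda>(i,j). A $$ (Suc i, Suc j))"
  shows "A = four_block_mat (mat 1 1 (\<lambda>_. e)) (0\<^sub>m 1 n) (0\<^sub>m n 1) B" and "B\<^sup>T = B"
proof -
  have Aij: "A $$ (i, j) = A $$ (j, i)" if "i < Suc n" "j < Suc n" for i j
    using arg_cong[OF sym, of "\<lambda>M. M $$ (j, i)"] A that by auto
  show "A = four_block_mat (mat 1 1 (\<lambda>_. e)) (0\<^sub>m 1 n) (0\<^sub>m n 1) B"
  proof (rule eq_matI)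
    fix i j assume "i < dim_row (four_block_mat (mat 1 1 (\<lambda>_. e)) (0\<^sub>m 1 n) (0\<^sub>m n 1) B)"
      "j < dim_col (four_block_mat (mat 1 1 (\<lambda>_. e)) (0\<^sub>m 1 n) (0\<^sub>m n 1) B)"
    hence i: "i < Suc n" and j: "j < Suc n" unfolding B_def by auto
    show "A $$ (i, j) = four_block_mat (mat 1 1 (\<lambda>_. e)) (0\<^sub>m 1 n) (0\<^sub>m n 1) B $$ (i, j)"
      using i j col0[OF i] col0[OF j] Aij[OF j, of 0] unfolding B_def
      by (cases i; cases j) auto
  qed (use A in \<open>auto simp: B_def\<close>)
  show "B\<^sup>T = B" unfolding B_def by (rule eq_matI) (auto simp: Aij)
qed

lemma symmetric_mat_deflation:
  fixes A :: "real mat"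
  assumes A: "A \<in> carrier_mat (Suc n) (Suc n)" and sym: "A\<^sup>T = A"
    and ev: "eigenvalue A e"
  obtains W B where "W \<in> carrier_mat (Suc n) (Suc n)" "W\<^sup>T * W = 1\<^sub>m (Suc n)" "W * W\<^sup>T = 1\<^sub>m (Suc n)"
    "B \<in> carrier_mat n n" "B\<^sup>T = B"
    "W\<^sup>T * A * W = four_block_mat (mat 1 1 (\<lambda>_. e)) (0\<^sub>m 1 n) (0\<^sub>m n 1) B"
proof -
  obtain v where v: "v \<in> carrier_vec (Suc n)" "v \<noteq> 0\<^sub>v (Suc n)" "A *\<^sub>v v = e \<cdot>\<^sub>v v"
    using ev A unfolding eigenvalue_def eigenvector_def by auto
  obtain W c where W: "W \<in> carrier_mat (Suc n) (Suc n)" and WW: "W\<^sup>T * W = 1\<^sub>m (Suc n)"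
    and W0: "col W 0 = c \<cdot>\<^sub>v v"
    using orthonormal_completion[OF v(1,2)] by blast
  have WW': "W * W\<^sup>T = 1\<^sub>m (Suc n)" by (rule mat_mult_left_right_inverse[OF _ W WW]) (use W in auto)
  have AW0: "A *\<^sub>v col W 0 = e \<cdot>\<^sub>v col W 0"
    unfolding W0 using mult_mat_vec[OF A v(1)] v(3) by (auto simp: smult_smult_assoc mult.commute)
  define A' where "A' = W\<^sup>T * A * W"
  have A': "A' \<in> carrier_mat (Suc n) (Suc n)" unfolding A'_def using W A by auto
  have A'sym: "A'\<^sup>T = A'"
  proof -
    have "A'\<^sup>T = W\<^sup>T * (W\<^sup>T * A)\<^sup>T" unfolding A'_def
      by (rule transpose_mult[of _ "Suc n" "Suc n"]) (use W A in auto)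
    also have "(W\<^sup>T * A)\<^sup>T = A\<^sup>T * W"
      using transpose_mult[of "W\<^sup>T" "Suc n" "Suc n" A "Suc n"] W A by simp
    finally show ?thesis unfolding A'_def sym using W A
      by (simp add: assoc_mult_mat[of _ "Suc n" "Suc n"])
  qed
  have "A' $$ (i, 0) = (if i = 0 then e else 0)" if i: "i < Suc n" for i
  proof -
    have "A' $$ (i,0) = col W i \<bullet> (A *\<^sub>v col W 0)"
      unfolding A'_def using i W A by (simp add: assoc_mult_mat[of _ "Suc n" "Suc n"] mult_mat_vec_def)
    also have "\<dots> = e * (W\<^sup>T * W) $$ (i, 0)"
      unfolding AW0 using W i by simp
    finally show ?thesis unfolding WW using i by simp
  qed
  from symmetric_mat_first_col_split[OF A' A'sym this] show thesis
    using that[OF W WW WW' mat_carrier] unfolding A'_def by blast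
qed

lemma char_poly_orthogonal_four_block:
  fixes A :: "'a :: field mat"
  assumes A: "A \<in> carrier_mat (Suc n) (Suc n)" and W: "W \<in> carrier_mat (Suc n) (Suc n)"
    and WW: "W\<^sup>T * W = 1\<^sub>m (Suc n)" and WW': "W * W\<^sup>T = 1\<^sub>m (Suc n)" and B: "B \<in> carrier_mat n n"
    and block: "W\<^sup>T * A * W = four_block_mat (mat 1 1 (\<lambda>_. e)) (0\<^sub>m 1 n) (0\<^sub>m n 1) B"
  shows "char_poly A = [:-e, 1:] * char_poly B"
proof -
  have "char_poly A = char_poly (W\<^sup>T * A * W)"
  proof (rule char_poly_similar[symmetric])
    show "similar_mat (W\<^sup>T * A * W) A" unfolding similar_mat_def similar_mat_wit_def
      by (rule exI[of _ "W\<^sup>T"], rule exI[of _ W]) (use A W WW WW' in \<open>auto simp: Let_def\<close>)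
  qed
  also have "\<dots> = [:-e, 1:] * char_poly B"
    unfolding block by (subst char_poly_four_block_zeros_col[OF _ _ B])
      (auto simp: char_poly_defs det_def sign_def)
  finally show ?thesis .
qed

lemma definite_subspace_four_block:
  fixes A :: "real mat" and \<sigma> :: real
  assumes A: "A \<in> carrier_mat (Suc n) (Suc n)" and W: "W \<in> carrier_mat (Suc n) (Suc n)"
    and WW': "W * W\<^sup>T = 1\<^sub>m (Suc n)" and B: "B \<in> carrier_mat n n"
    and block: "W\<^sup>T * A * W = four_block_mat (mat 1 1 (\<lambda>_. e)) (0\<^sub>m 1 n) (0\<^sub>m n 1) B"
    and se: "\<sigma> * e \<le> 0" and U: "U \<in> carrier_mat (Suc n) k"
    and definite: "\<forall>c \<in> carrier_vec k. c \<noteq> 0\<^sub>v k \<longrightarrow> \<sigma> * ((U *\<^sub>v c) \<bullet> (A *\<^sub>v (U *\<^sub>v c))) > 0"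
  obtains U' where "U' \<in> carrier_mat n k"
    and "\<forall>c \<in> carrier_vec k. c \<noteq> 0\<^sub>v k \<longrightarrow> \<sigma> * ((U' *\<^sub>v c) \<bullet> (B *\<^sub>v (U' *\<^sub>v c))) > 0"
proof -
  define M where "M = W\<^sup>T * U"
  have M: "M \<in> carrier_mat (Suc n) k" unfolding M_def using W U by simp
  define U' where "U' = mat n k (\<lambda>(i,j). M $$ (Suc i, j))"
  have "\<forall>c \<in> carrier_vec k. c \<noteq> 0\<^sub>v k \<longrightarrow> \<sigma> * ((U' *\<^sub>v c) \<bullet> (B *\<^sub>v (U' *\<^sub>v c))) > 0"
  proof (intro ballI impI)
    fix c :: "real vec" assume c: "c \<in> carrier_vec k" "c \<noteq> 0\<^sub>v k"
    define x where "x = U *\<^sub>v c"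
    have x: "x \<in> carrier_vec (Suc n)" unfolding x_def using U c by auto
    define z where "z = W\<^sup>T *\<^sub>v x"
    have Wt: "W\<^sup>T \<in> carrier_mat (Suc n) (Suc n)" using W by simp
    have z: "z \<in> carrier_vec (Suc n)" unfolding z_def using Wt x by auto
    have Uc: "U *\<^sub>v c = W *\<^sub>v z" unfolding z_def x_def[symmetric]
      using W Wt x WW' by (simp flip: assoc_mult_mat_vec[of _ "Suc n" "Suc n"])
    have zM: "z = M *\<^sub>v c" unfolding z_def x_def M_def using Wt U c by simp
    have tail: "vec n (\<lambda>i. z $ Suc i) = U' *\<^sub>v c"
      unfolding zM U'_def using M c
      by (intro eq_vecI) (auto simp: row_def intro!: arg_cong[where f="\<lambda>v. v \<bullet> c"] eq_vecI)
    have "(U *\<^sub>v c) \<bullet> (A *\<^sub>v (U *\<^sub>v c)) = z \<bullet> ((W\<^sup>T * A * W) *\<^sub>v z)"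
      unfolding Uc by (rule quadratic_form_mult_mat_vec[OF A W z])
    also have "\<dots> = e * (z $ 0) * (z $ 0) + (U' *\<^sub>v c) \<bullet> (B *\<^sub>v (U' *\<^sub>v c))"
      unfolding block tail[symmetric] by (rule quadratic_form_four_block_diag[OF B z])
    finally have quadratic:
      "(U *\<^sub>v c) \<bullet> (A *\<^sub>v (U *\<^sub>v c)) = e * (z $ 0) * (z $ 0) + (U' *\<^sub>v c) \<bullet> (B *\<^sub>v (U' *\<^sub>v c))" .
    have "\<sigma> * ((U *\<^sub>v c) \<bullet> (A *\<^sub>v (U *\<^sub>v c))) > 0" using definite c by simp
    moreover have "\<sigma> * (e * (z $ 0) * (z $ 0)) \<le> 0"
      using se by (metis mult.assoc mult_nonpos_nonneg zero_le_square)
    ultimately show "\<sigma> * ((U' *\<^sub>v c) \<bullet> (B *\<^sub>v (U' *\<^sub>v c))) > 0"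
      unfolding quadratic distrib_left by linarith
  qed
  moreover have "U' \<in> carrier_mat n k" unfolding U'_def by simp
  ultimately show thesis using that by blast
qed

lemma definite_subspace_dim_le:
  fixes A :: "'a :: linordered_field mat"
  assumes A: "A \<in> carrier_mat n n" and U: "U \<in> carrier_mat n k"
    and definite: "\<forall>c \<in> carrier_vec k. c \<noteq> 0\<^sub>v k \<longrightarrow> \<sigma> * ((U *\<^sub>v c) \<bullet> (A *\<^sub>v (U *\<^sub>v c))) > 0"
  shows "k \<le> n"
proof (rule ccontr)
  assume "\<not> k \<le> n"
  then obtain c where c: "c \<in> carrier_vec k" "c \<noteq> 0\<^sub>v k" "U *\<^sub>v c = 0\<^sub>v n"
    using wide_mat_kernel_nontrivial[OF U] by (metis not_le)
  have "(U *\<^sub>v c) \<bullet> (A *\<^sub>v (U *\<^sub>v c)) = 0" unfolding c(3) using A by simp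
  with definite c show False by auto
qed

lemma filter_remove1_length_le: "length (filter P (remove1 x xs)) \<le> length (filter P xs)"
  by (induction xs) auto

text \<open>An eigenvalue \<open>e\<close> with \<open>\<sigma> * e \<le> 0\<close> is split off by an orthogonal change of basis;
  this can only decrease \<open>\<sigma>\<close> times the quadratic form on the remaining coordinates, so the
  induction hypothesis applies to the complementary block.\<close>
lemma inertia_lower_bound:
  fixes A :: "real mat" and \<sigma> :: real
  assumes "A \<in> carrier_mat n n" "A\<^sup>T = A" "char_poly A = (\<Prod>e\<leftarrow>es. [:-e,1:])"
    and "U \<in> carrier_mat n k"
    and "\<forall>c \<in> carrier_vec k. c \<noteq> 0\<^sub>v k \<longrightarrow> \<sigma> * ((U *\<^sub>v c) \<bullet> (A *\<^sub>v (U *\<^sub>v c))) > 0"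
  shows "k \<le> length (filter (\<lambda>e. \<sigma> * e > 0) es)"
  using assms
proof (induction n arbitrary: A es U)
  case (0 A es U)
  show ?case using definite_subspace_dim_le[OF 0(1) 0(4) 0(5)] by simp
next
  case (Suc n A es U)
  note A = Suc(2) and sym = Suc(3) and cp = Suc(4) and U = Suc(5) and definite = Suc(6)
  have len: "length es = Suc n"
    using degree_monic_char_poly[OF A] degree_linear_factors[of uminus es] cp by auto
  show ?case
  proof (cases "\<forall>e \<in> set es. \<sigma> * e > 0")
    case True
    hence "filter (\<lambda>e. \<sigma> * e > 0) es = es" by simp
    thus ?thesis using definite_subspace_dim_le[OF A U definite] len by simp
  next
    case False
    then obtain e where e: "e \<in> set es" and se: "\<sigma> * e \<le> 0" by auto
    define es' where "es' = remove1 e es"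
    have cp': "char_poly A = [:-e,1:] * (\<Prod>e\<leftarrow>es'. [:-e,1:])"
      unfolding cp es'_def by (rule prod_list_map_remove1[OF e])
    have "eigenvalue A e" unfolding eigenvalue_root_char_poly[OF A] cp' by simp
    then obtain W B where W: "W \<in> carrier_mat (Suc n) (Suc n)" and WW: "W\<^sup>T * W = 1\<^sub>m (Suc n)"
      and WW': "W * W\<^sup>T = 1\<^sub>m (Suc n)" and B: "B \<in> carrier_mat n n" and Bsym: "B\<^sup>T = B"
      and block: "W\<^sup>T * A * W = four_block_mat (mat 1 1 (\<lambda>_. e)) (0\<^sub>m 1 n) (0\<^sub>m n 1) B"
      by (rule symmetric_mat_deflation[OF A sym])
    have cpB: "char_poly B = (\<Prod>e\<leftarrow>es'. [:-e,1:])"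
      using char_poly_orthogonal_four_block[OF A W WW WW' B block] unfolding cp'
      by (metis mult_cancel_left pCons_eq_0_iff zero_neq_one)
    obtain U' where U': "U' \<in> carrier_mat n k"
      and definite': "\<forall>c \<in> carrier_vec k. c \<noteq> 0\<^sub>v k \<longrightarrow> \<sigma> * ((U' *\<^sub>v c) \<bullet> (B *\<^sub>v (U' *\<^sub>v c))) > 0"
      by (rule definite_subspace_four_block[OF A W WW' B block se U definite])
    have "k \<le> length (filter (\<lambda>e. \<sigma> * e > 0) es')"
      by (rule Suc.IH[OF B Bsym cpB U' definite'])
    also have "\<dots> \<le> length (filter (\<lambda>e. \<sigma> * e > 0) es)"
      unfolding es'_def by (rule filter_remove1_length_le)
    finally show ?thesis .
  qed
qed

lemma congruent_diagonal_eigenvalue_count: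
  fixes A :: "real mat" and \<sigma> :: real
  assumes A: "A \<in> carrier_mat n n" and sym: "A\<^sup>T = A" and es: "char_poly A = (\<Prod>e\<leftarrow>es. [:-e,1:])"
    and U: "U \<in> carrier_mat n k" and diag: "diagonal_mat (U\<^sup>T * A * U)"
    and sign: "\<And>i. i < k \<Longrightarrow> \<sigma> * (U\<^sup>T * A * U) $$ (i,i) > 0"
  shows "k \<le> length (filter (\<lambda>e. \<sigma> * e > 0) es)"
proof (rule inertia_lower_bound[OF A sym es U], intro ballI impI)
  fix c :: "real vec" assume c: "c \<in> carrier_vec k" "c \<noteq> 0\<^sub>v k"
  then obtain i where i: "i < k" "c $ i \<noteq> 0" by (metis eq_vecI carrier_vecD index_zero_vec)
  have D: "U\<^sup>T * A * U \<in> carrier_mat k k" using A U by auto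
  have "\<sigma> * ((U *\<^sub>v c) \<bullet> (A *\<^sub>v (U *\<^sub>v c))) = (\<Sum>i<k. \<sigma> * (U\<^sup>T * A * U) $$ (i,i) * (c $ i)\<^sup>2)"
    unfolding quadratic_form_mult_mat_vec[OF A U c(1)] quadratic_form_diagonal_mat[OF D diag c(1)]
    by (simp add: sum_distrib_left mult.assoc)
  also have "\<dots> > 0"
    using i sign by (intro sum_pos2[of _ i]) (auto intro!: mult_nonneg_nonneg[OF less_imp_le])
  finally show "\<sigma> * ((U *\<^sub>v c) \<bullet> (A *\<^sub>v (U *\<^sub>v c))) > 0" .
qed

lemma i_plus_ge_congruent_diagonal:
  fixes A :: "real mat"
  assumes A: "A \<in> carrier_mat n n" and sym: "A\<^sup>T = A"
    and U: "U \<in> carrier_mat n k" and diag: "diagonal_mat (U\<^sup>T * A * U)"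
    and pos: "\<And>i. i < k \<Longrightarrow> (U\<^sup>T * A * U) $$ (i,i) > 0"
  shows "k \<le> i_plus A"
proof -
  obtain es where es: "char_poly A = (\<Prod>e\<leftarrow>es. [:-e,1:])" and "length es = n"
    and ip: "i_plus A = length (filter (\<lambda>e. e > 0) es)" and "i_minus A = length (filter (\<lambda>e. e < 0) es)"
    by (rule real_symmetric_inertia_eigenvalues[OF A sym])
  have "k \<le> length (filter (\<lambda>e. 1 * e > 0) es)"
    by (rule congruent_diagonal_eigenvalue_count[OF A sym es U diag]) (simp add: pos)
  thus ?thesis unfolding ip by simp
qed

lemma i_minus_ge_congruent_diagonal:
  fixes A :: "real mat"
  assumes A: "A \<in> carrier_mat n n" and sym: "A\<^sup>T = A"
    and U: "U \<in> carrier_mat n k" and diag: "diagonal_mat (U\<^sup>T * A * U)"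
    and neg: "\<And>i. i < k \<Longrightarrow> (U\<^sup>T * A * U) $$ (i,i) < 0"
  shows "k \<le> i_minus A"
proof -
  obtain es where es: "char_poly A = (\<Prod>e\<leftarrow>es. [:-e,1:])" and "length es = n"
    and "i_plus A = length (filter (\<lambda>e. e > 0) es)" and im: "i_minus A = length (filter (\<lambda>e. e < 0) es)"
    by (rule real_symmetric_inertia_eigenvalues[OF A sym])
  have "k \<le> length (filter (\<lambda>e. (-1) * e > 0) es)"
    by (rule congruent_diagonal_eigenvalue_count[OF A sym es U diag]) (simp add: neg)
  thus ?thesis unfolding im by simp
qed

section \<open>LCM matrices of GCD closed sets\<close>

lemma gcd_closed_Min_dvd:
  assumes "finite S" and "\<forall>x\<in>S. x > 0" and "gcd_closed S" and x: "x \<in> S"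
  shows "Min S dvd x"
proof -
  have "Min S \<in> S" using assms by (intro Min_in) auto
  hence "gcd (Min S) x \<in> S" and "Min S > 0" using assms unfolding gcd_closed_def by auto
  hence "Min S \<le> gcd (Min S) x" and "gcd (Min S) x \<le> Min S"
    using \<open>finite S\<close> by (auto simp: gcd_le1_nat)
  hence "gcd (Min S) x = Min S" by simp
  thus ?thesis by (metis gcd_dvd2)
qed

lemma gcd_closed_gcd_second_Min:
  assumes "finite S" and "\<forall>x\<in>S. x > 0" and "gcd_closed S"
    and ne: "S - {Min S} \<noteq> {}" and b: "b \<in> S"
  defines "a \<equiv> Min (S - {Min S})"
  shows "gcd a b = Min S \<or> gcd a b = a"
proof -
  have a: "a \<in> S" unfolding a_def using assms Min_in[of "S - {Min S}"] by auto
  have g: "gcd a b \<in> S" using a b \<open>gcd_closed S\<close> unfolding gcd_closed_def by blast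
  have "gcd a b \<le> a" using a assms by (intro gcd_le1_nat) auto
  moreover have "gcd a b = Min S \<or> a \<le> gcd a b"
    using g \<open>finite S\<close> unfolding a_def by (auto intro: Min_le)
  ultimately show ?thesis by linarith
qed

lemma gcd_closed_sorted_first_three:
  assumes fin: "finite S" and pos: "\<forall>x\<in>S. x > 0" and gc: "gcd_closed S" and n: "3 \<le> card S"
  defines "xs \<equiv> sorted_list_of_set S"
  shows "0 < xs ! 0" and "xs ! 0 < xs ! 1" and "xs ! 1 < xs ! 2"
    and "xs ! 0 dvd xs ! 1" and "xs ! 0 dvd xs ! 2"
    and "gcd (xs ! 1) (xs ! 2) = xs ! 0 \<or> gcd (xs ! 1) (xs ! 2) = xs ! 1"
proof -
  have len: "length xs = card S" and set: "set xs = S" and strict: "sorted_wrt (<) xs"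
    unfolding xs_def using fin by simp_all
  have inS: "xs ! i \<in> S" if "i < 3" for i using that n len set by (metis nth_mem less_le_trans)
  have ne: "S \<noteq> {}" using n by auto
  have "card (S - {Min S}) = card S - 1" using fin ne by (simp add: Min_in)
  hence "card (S - {Min S}) > 0" using n by linarith
  hence ne': "S - {Min S} \<noteq> {}" by (metis card.empty less_irrefl)
  have x0: "xs ! 0 = Min S" and x1: "xs ! 1 = Min (S - {Min S})"
    unfolding xs_def using sorted_list_of_set_nonempty[OF fin ne] sorted_list_of_set_nonempty[of "S - {Min S}"] fin ne'
    by simp_all
  show "0 < xs ! 0" using inS pos by simp
  show "xs ! 0 < xs ! 1" and "xs ! 1 < xs ! 2" using strict len n by (simp_all add: sorted_wrt_nth_less)
  show "xs ! 0 dvd xs ! 1" and "xs ! 0 dvd xs ! 2"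
    unfolding x0 using gcd_closed_Min_dvd[OF fin pos gc] inS by simp_all
  show "gcd (xs ! 1) (xs ! 2) = xs ! 0 \<or> gcd (xs ! 1) (xs ! 2) = xs ! 1"
    unfolding x0 x1 by (rule gcd_closed_gcd_second_Min[OF fin pos gc ne' inS]) simp
qed

text \<open>If \<open>a\<close> divides \<open>b\<close>, take \<open>e\<^sub>0 - e\<^sub>1\<close> and \<open>e\<^sub>1 - e\<^sub>2\<close>; if \<open>gcd a b = m\<close>, then
  \<open>lcm a b = a b / m\<close> and \<open>m e\<^sub>1 - a e\<^sub>0\<close>, \<open>m e\<^sub>2 - b e\<^sub>0\<close> work.\<close>
lemma lcm_three_negative_pair:
  fixes m a b :: nat
  assumes m: "0 < m" and ma: "m < a" and ab: "a < b" and "m dvd a" and "m dvd b"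
    and gcd_ab: "gcd a b = m \<or> gcd a b = a"
  defines "L \<equiv> \<lambda>i j. real (lcm ([m,a,b] ! i) ([m,a,b] ! j))"
  obtains u v :: "nat \<Rightarrow> real" where
    "(\<Sum>i<3. \<Sum>j<3. u i * L i j * u j) < 0" and "(\<Sum>i<3. \<Sum>j<3. v i * L i j * v j) < 0"
    and "(\<Sum>i<3. \<Sum>j<3. u i * L i j * v j) = 0" and "(\<Sum>i<3. \<Sum>j<3. v i * L i j * u j) = 0"
proof -
  have L: "L 0 0 = m" "L 0 1 = a" "L 1 0 = a" "L 0 2 = b" "L 2 0 = b" "L 1 1 = a" "L 2 2 = b"
    "L 1 2 = lcm a b" "L 2 1 = lcm a b"
    using assms by (simp_all add: L_def lcm_proj2_if_dvd lcm_proj1_if_dvd lcm.commute)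
  note L' = L[unfolded One_nat_def numeral_2_eq_2]
  show thesis
  proof (cases "gcd a b = a")
    case True
    hence "a dvd b" by (metis gcd_dvd2)
    hence "lcm a b = b" by (simp add: lcm_proj2_if_dvd)
    show thesis
      by (rule that[of "\<lambda>i. [1, -1, 0] ! i" "\<lambda>i. [0, 1, -1] ! i"])
        (use ma ab in \<open>simp_all add: eval_nat_numeral L L' \<open>lcm a b = b\<close>\<close>)
  next
    case False
    hence "gcd a b = m" using gcd_ab by simp
    hence lcm_ab: "real (lcm a b) = real a * real b / real m"
      using prod_gcd_lcm_nat[of a b] m by (simp add: field_simps flip: of_nat_mult)
    define u where "u i = [- real a, real m, 0] ! i" for i
    define v where "v i = [- real b, 0, real m] ! i" for i
    have "(\<Sum>i<3. \<Sum>j<3. u i * L i j * u j) = real m * real a * (real m - real a)"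
      by (simp add: u_def eval_nat_numeral L L') (simp add: algebra_simps)
    moreover have "(\<Sum>i<3. \<Sum>j<3. v i * L i j * v j) = real m * real b * (real m - real b)"
      by (simp add: v_def eval_nat_numeral L L') (simp add: algebra_simps)
    moreover have "(\<Sum>i<3. \<Sum>j<3. u i * L i j * v j) = 0" "(\<Sum>i<3. \<Sum>j<3. v i * L i j * u j) = 0"
      using m by (simp_all add: u_def v_def eval_nat_numeral L L' lcm_ab field_simps)
    moreover have "real m * real a * (real m - real a) < 0" "real m * real b * (real m - real b) < 0"
      using m ma ab by (simp_all add: mult_pos_neg)
    ultimately show thesis using that[of u v] by auto
  qed
qed

lemma lcm_matrix_eq:
  assumes "finite S"
  defines "xs \<equiv> sorted_list_of_set S"
  shows "lcm_matrix S = mat (card S) (card S) (\<lambda>(i,j). real (lcm (xs ! i) (xs ! j)))"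
  using assms unfolding lcm_matrix_def Let_def by simp

lemma lcm_matrix_carrier_symmetric:
  assumes "finite S"
  shows "lcm_matrix S \<in> carrier_mat (card S) (card S)" and "(lcm_matrix S)\<^sup>T = lcm_matrix S"
  unfolding lcm_matrix_eq[OF assms] by (auto intro!: eq_matI simp: lcm.commute)

lemma lcm_matrix_i_plus_ge_1:
  assumes fin: "finite S" and pos: "\<forall>x\<in>S. x > 0" and ne: "S \<noteq> {}"
  shows "1 \<le> i_plus (lcm_matrix S)"
proof -
  define n where "n = card S"
  define xs where "xs = sorted_list_of_set S"
  define M where "M = lcm_matrix S"
  have n: "0 < n" unfolding n_def using fin ne by (simp add: card_gt_0_iff)
  have M: "M \<in> carrier_mat n n" "M\<^sup>T = M"
    unfolding M_def n_def using lcm_matrix_carrier_symmetric[OF fin] by auto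
  have "xs ! 0 \<in> S" unfolding xs_def using fin n n_def by (metis nth_mem length_sorted_list_of_set set_sorted_list_of_set)
  hence x0: "xs ! 0 > 0" using pos by auto
  define U :: "real mat" where "U = mat_of_cols n [unit_vec n 0]"
  have "(U\<^sup>T * M * U) $$ (0,0) = unit_vec n 0 \<bullet> (M *\<^sub>v unit_vec n 0)"
    unfolding U_def using mat_of_cols_congruence_index[OF M(1), of "[unit_vec n 0]" 0 0] by simp
  also have "\<dots> = (\<Sum>i<1. \<Sum>j<1. unit_vec n 0 $ i * M $$ (i,j) * unit_vec n 0 $ j)"
    using n by (intro scalar_prod_mult_mat_vec_supported[OF M(1)]) auto
  also have "\<dots> = real (xs ! 0)"
    using n unfolding M_def lcm_matrix_eq[OF fin] xs_def[symmetric] n_def[symmetric] by simp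
  finally have "(U\<^sup>T * M * U) $$ (0,0) > 0" using x0 by simp
  moreover have "diagonal_mat (U\<^sup>T * M * U)" unfolding diagonal_mat_def U_def by simp
  ultimately show ?thesis unfolding M_def[symmetric]
    by (intro i_plus_ge_congruent_diagonal[OF M, of U]) (auto simp: U_def)
qed

lemma lcm_matrix_i_minus_ge_2:
  assumes fin: "finite S" and pos: "\<forall>x\<in>S. x > 0" and gc: "gcd_closed S" and n3: "3 \<le> card S"
  shows "2 \<le> i_minus (lcm_matrix S)"
proof -
  define n where "n = card S"
  define xs where "xs = sorted_list_of_set S"
  define M where "M = lcm_matrix S"
  have M: "M \<in> carrier_mat n n" "M\<^sup>T = M"
    unfolding M_def n_def using lcm_matrix_carrier_symmetric[OF fin] by auto
  define L where "L = (\<lambda>i j. real (lcm ([xs ! 0, xs ! 1, xs ! 2] ! i) ([xs ! 0, xs ! 1, xs ! 2] ! j)))"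
  obtain u v where uu: "(\<Sum>i<3. \<Sum>j<3. u i * L i j * u j) < 0" and vv: "(\<Sum>i<3. \<Sum>j<3. v i * L i j * v j) < 0"
    and uv: "(\<Sum>i<3. \<Sum>j<3. u i * L i j * v j) = 0" and vu: "(\<Sum>i<3. \<Sum>j<3. v i * L i j * u j) = 0"
    using lcm_three_negative_pair[OF gcd_closed_sorted_first_three[OF fin pos gc n3, folded xs_def]]
    unfolding L_def by blast
  define pad where "pad w = vec n (\<lambda>i. if i < 3 then w i else 0)" for w :: "nat \<Rightarrow> real"
  have pad: "pad w \<in> carrier_vec n" for w unfolding pad_def by simp
  have entries: "M $$ (i,j) = L i j" if "i < 3" "j < 3" for i j
  proof -
    have "[xs ! 0, xs ! 1, xs ! 2] ! i = xs ! i" if "i < 3" for i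
      using that by (auto simp: less_Suc_eq numeral_3_eq_3 numeral_2_eq_2)
    thus ?thesis using that n3 unfolding M_def lcm_matrix_eq[OF fin] L_def xs_def[symmetric] by simp
  qed
  have form: "pad w \<bullet> (M *\<^sub>v pad w') = (\<Sum>i<3. \<Sum>j<3. w i * L i j * w' j)" for w w'
  proof -
    have "pad w \<bullet> (M *\<^sub>v pad w') = (\<Sum>i<3. \<Sum>j<3. pad w $ i * M $$ (i,j) * pad w' $ j)"
      by (rule scalar_prod_mult_mat_vec_supported[OF M(1) pad pad]) (use n3 in \<open>auto simp: n_def pad_def\<close>)
    also have "\<dots> = (\<Sum>i<3. \<Sum>j<3. w i * L i j * w' j)"
      using n3 by (intro sum.cong refl) (simp add: n_def pad_def entries)
    finally show ?thesis .
  qed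
  define U where "U = mat_of_cols n [pad u, pad v]"
  have "length [pad u, pad v] = 2" by simp
  hence U: "U \<in> carrier_mat n 2" unfolding U_def by (metis mat_of_cols_carrier)
  have UMU: "(U\<^sup>T * M * U) $$ (i,j) = [pad u, pad v] ! i \<bullet> (M *\<^sub>v [pad u, pad v] ! j)"
    if "i < 2" "j < 2" for i j
    unfolding U_def by (rule mat_of_cols_congruence_index[OF M(1)]) (use that pad in auto)
  have "diagonal_mat (U\<^sup>T * M * U)"
    unfolding diagonal_mat_def using U UMU uv vu by (auto simp: form less_2_cases_iff)
  moreover have "(U\<^sup>T * M * U) $$ (i,i) < 0" if "i < 2" for i
    using that UMU uu vv by (auto simp: form less_2_cases_iff)
  ultimately show ?thesis unfolding M_def[symmetric] by (rule i_minus_ge_congruent_diagonal[OF M U])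
qed

theorem theorem5p2:
  fixes S :: "nat set" and n :: nat
  assumes "finite S" and "\<forall>x\<in>S. x > 0" and "gcd_closed S"
    and "card S = n" and "n \<ge> 3"
  shows "i_plus (lcm_matrix S) \<ge> 1 \<and> 2 \<le> i_minus (lcm_matrix S) \<and> i_minus (lcm_matrix S) \<le> n - 1"
proof -
  have "S \<noteq> {}" using assms(4,5) by auto
  with assms(1,2) have "1 \<le> i_plus (lcm_matrix S)" by (rule lcm_matrix_i_plus_ge_1)
  moreover have "2 \<le> i_minus (lcm_matrix S)"
    using assms by (intro lcm_matrix_i_minus_ge_2) simp_all
  moreover have "i_plus (lcm_matrix S) + i_minus (lcm_matrix S) \<le> n"
    using i_plus_add_i_minus_le[OF lcm_matrix_carrier_symmetric[OF assms(1)]] assms(4) by simp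
  ultimately show ?thesis by linarith
qed

end
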